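(* Let $v\ge 2$, $l\ge 1$ and $t\ge 1$ be integers, put $n=vl$, and assume $n>2t-2$. Let $B$ be the set of sequences $\sigma\in\mathbb{Z}_v^n$ (indexed $0,\dots,n-1$) in which every symbol occurs exactly $l$ times, and choose $\sigma\in B$ uniformly at random. For $z\in\mathbb{Z}_v^t$ let $\lambda(z)=\#\{i\in\{0,\dots,n-1\}:\ \sigma((i+\iota)\,\%\,n)=z(\iota)\ \forall\,0\le\iota<t\}$. If $(z(i),\dots,z(t-1))\neq(z(0),\dots,z(t-1-i))$ for all $1\le i<t$, then $$\mathrm{VAR}(\lambda(z))=\frac{\prod_{a=0}^{v-1}(l)_{|z|_a}}{(n-1)_{t-1}}-\left(\frac{\prod_{a=0}^{v-1}(l)_{|z|_a}}{(n-1)_{t-1}}\right)^2+\frac{\prod_{a=0}^{v-1}(l)_{2|z|_a}}{(n-1)_{2t-2}}.$$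
   Context: $x\,\%\,n$ is the least nonnegative remainder modulo $n$. $(x)_m=x(x-1)\cdots(x-m+1)$ is the falling factorial. For $a\in\mathbb{Z}_v$, $|z|_a$ is the number of entries of $z$ equal to $a$. *)

theory Defs
  imports "HOL-Probability.Probability"
begin

definition falling :: "nat \<Rightarrow> nat \<Rightarrow> real" where
  "falling x m = (\<Prod>i<m. (real x - real i))"

definition balanced_seqs :: "nat \<Rightarrow> nat \<Rightarrow> nat list set" where
  "balanced_seqs v l = {\<sigma>. length \<sigma> = v * l \<and> set \<sigma> \<subseteq> {..<v} \<and>
                          (\<forall>a<v. count_list \<sigma> a = l)}"

definition occ :: "nat list \<Rightarrow> nat list \<Rightarrow> nat" where
  "occ \<sigma> z = card {i. i < length \<sigma> \<and>
      (\<forall>\<iota><length z. \<sigma> ! ((i + \<iota>) mod length \<sigma>) = z ! \<iota>)}"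

end

theory Submission
  imports Defs "HOL-Combinatorics.Multiset_Permutations"
begin

text \<open>
  The count \<lambda>(z) is the sum over the n positions i of the indicator that z occurs cyclically at i.
  A uniformly random balanced sequence is a uniformly random arrangement of the multiset with l
  copies of every symbol, so the probability that k prescribed distinct positions carry the letters
  of a word w is (\<Prod>a. (l)_{|w|_a}) / (n)_k, wherever these positions are. Hence
  E \<lambda> = n (\<Prod>a. (l)_{|z|_a}) / (n)_t. In E(\<lambda>^2), two occurrences at cyclic distance d with
  0 < d < t or n - t < d < n would overlap, which is impossible because z has no border; for each
  of the n + 1 - 2t distances t \<le> d \<le> n - t the two windows are disjoint and carry the word zz.
  The identities (n)_t = n (n-1)_{t-1} and (n)_{2t} = n (n+1-2t) (n-1)_{2t-2} then give the
  stated variance.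
\<close>

lemma falling_Suc: "falling x (Suc m) = falling x m * (real x - real m)"
  by (simp add: falling_def)

lemma falling_Suc_Suc: "falling (Suc x) (Suc m) = real (Suc x) * falling x m"
proof (induction m)
  case 0
  then show ?case by (simp add: falling_def)
next
  case (Suc m)
  then show ?case by (simp add: falling_Suc algebra_simps)
qed

lemma falling_Suc_Suc_first_last:
  assumes "Suc k \<le> x"
  shows "falling x (Suc (Suc k)) = real x * real (x - Suc k) * falling (x - 1) k"
proof -
  obtain y where x: "x = Suc y"
    using assms by (cases x) auto
  have "falling x (Suc (Suc k)) = falling x (Suc k) * (real x - real (Suc k))"
    by (rule falling_Suc)
  also have "falling x (Suc k) = real x * falling y k"
    unfolding x by (rule falling_Suc_Suc)
  finally show ?thesis
    using assms x by (simp add: of_nat_diff)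
qed

lemma falling_mult_fact: "m \<le> x \<Longrightarrow> falling x m * fact (x - m) = fact x"
proof (induction m)
  case 0
  then show ?case by (simp add: falling_def)
next
  case (Suc m)
  then have "fact (x - m) = (real x - real m) * (fact (x - Suc m) :: real)"
    by (metis Suc_diff_Suc Suc_le_lessD fact_Suc of_nat_diff less_imp_le_nat)
  with Suc show ?case by (simp add: falling_Suc)
qed

lemma falling_eq_0: "x < m \<Longrightarrow> falling x m = 0"
  unfolding falling_def by (intro prod_zero) (auto intro!: bexI[of _ x])

lemma falling_nonzero: "m \<le> x \<Longrightarrow> falling x m \<noteq> 0"
  using falling_mult_fact[of m x] by auto

lemma prod_falling_count_list_eq_0:
  assumes "set ws \<subseteq> {..<v}" and "v * l < length ws"
  shows "(\<Prod>a<v. falling l (count_list ws a)) = 0"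
proof -
  have "\<exists>a<v. l < count_list ws a"
  proof (rule ccontr)
    assume "\<not> ?thesis"
    then have "(\<Sum>a<v. count_list ws a) \<le> (\<Sum>a<v. l)"
      by (intro sum_mono) auto
    then show False
      using assms sum_count_set[of ws "{..<v}"] by (simp add: mult.commute)
  qed
  then show ?thesis
    by (auto intro: prod_zero falling_eq_0)
qed

lemma card_filter_eq_sum_of_bool: "finite I \<Longrightarrow> card {i\<in>I. P i} = (\<Sum>i\<in>I. of_bool (P i))"
  using sum_of_bool_eq[of I P] by (simp add: Int_def)

lemma card_filter_sum_swap:
  assumes "finite A" "finite I"
  shows "(\<Sum>x\<in>A. card {i\<in>I. P i x}) = (\<Sum>i\<in>I. card {x\<in>A. P i x})"
  using assms by (simp only: card_filter_eq_sum_of_bool) (rule sum.swap)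

lemma card_filter_squared_sum_swap:
  assumes "finite A" "finite I"
  shows "(\<Sum>x\<in>A. (card {i\<in>I. P i x})\<^sup>2) = (\<Sum>i\<in>I. \<Sum>j\<in>I. card {x\<in>A. P i x \<and> P j x})"
proof -
  have "(card {i\<in>I. P i x})\<^sup>2 = (\<Sum>i\<in>I. card {j\<in>I. P i x \<and> P j x})" for x
    using assms by (simp only: card_filter_eq_sum_of_bool power2_eq_square sum_product of_bool_conj)
  then have "(\<Sum>x\<in>A. (card {i\<in>I. P i x})\<^sup>2) = (\<Sum>x\<in>A. \<Sum>i\<in>I. card {j\<in>I. P i x \<and> P j x})"
    by simp
  also have "\<dots> = (\<Sum>i\<in>I. \<Sum>x\<in>A. card {j\<in>I. P i x \<and> P j x})"
    by (rule sum.swap)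
  also have "\<dots> = (\<Sum>i\<in>I. \<Sum>j\<in>I. card {x\<in>A. P i x \<and> P j x})"
    using assms by (intro sum.cong refl card_filter_sum_swap)
  finally show ?thesis .
qed

lemma variance_pmf_of_set:
  fixes X :: "'a \<Rightarrow> real"
  assumes "finite A" "A \<noteq> {}"
  shows "measure_pmf.variance (pmf_of_set A) X =
    measure_pmf.expectation (pmf_of_set A) (\<lambda>x. (X x)\<^sup>2) - (measure_pmf.expectation (pmf_of_set A) X)\<^sup>2"
  using assms by (intro measure_pmf.variance_eq integrable_measure_pmf_finite) auto

definition balanced_mset :: "nat \<Rightarrow> nat \<Rightarrow> nat multiset" where
  "balanced_mset v l = (\<Sum>a<v. replicate_mset l a)"

lemma count_balanced_mset: "count (balanced_mset v l) a = (if a < v then l else 0)"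
  unfolding balanced_mset_def by (simp add: count_sum)

lemma size_balanced_mset: "size (balanced_mset v l) = v * l"
  unfolding balanced_mset_def by (induction v) (simp_all add: lessThan_Suc)

lemma set_mset_balanced_mset: "set_mset (balanced_mset v l) \<subseteq> {..<v}"
  by (auto simp: count_balanced_mset simp flip: count_greater_zero_iff split: if_splits)

lemma balanced_seqs_eq_permutations_of_multiset:
  "balanced_seqs v l = permutations_of_multiset (balanced_mset v l)"
proof (intro set_eqI iffI)
  fix \<sigma> assume "\<sigma> \<in> balanced_seqs v l"
  then have "mset \<sigma> = balanced_mset v l"
    by (auto simp: multiset_eq_iff balanced_seqs_def count_balanced_mset count_list_0_iff
             simp flip: count_mset)
  then show "\<sigma> \<in> permutations_of_multiset (balanced_mset v l)"
    by (rule permutations_of_multisetI)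
next
  fix \<sigma> assume "\<sigma> \<in> permutations_of_multiset (balanced_mset v l)"
  then have \<sigma>: "mset \<sigma> = balanced_mset v l"
    by (rule permutations_of_multisetD)
  then have "length \<sigma> = v * l"
    by (metis size_balanced_mset size_mset)
  moreover have "set \<sigma> \<subseteq> {..<v}"
    using \<sigma> set_mset_balanced_mset by (metis set_mset_mset)
  moreover have "\<forall>a<v. count_list \<sigma> a = l"
    using \<sigma> by (metis count_balanced_mset count_mset)
  ultimately show "\<sigma> \<in> balanced_seqs v l"
    by (simp add: balanced_seqs_def)
qed

lemma finite_balanced_seqs: "finite (balanced_seqs v l)"
  by (simp add: balanced_seqs_eq_permutations_of_multiset)

lemma balanced_seqs_nonempty: "balanced_seqs v l \<noteq> {}"
  by (simp add: balanced_seqs_eq_permutations_of_multiset)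

lemma length_balanced_seqs: "\<sigma> \<in> balanced_seqs v l \<Longrightarrow> length \<sigma> = v * l"
  by (simp add: balanced_seqs_def)

lemma card_permutations_of_multiset_prefix:
  assumes "mset ws \<subseteq># A"
  shows "card {xs \<in> permutations_of_multiset A. take (length ws) xs = ws} =
         card (permutations_of_multiset (A - mset ws))"
proof -
  have "{xs \<in> permutations_of_multiset A. take (length ws) xs = ws} =
        (\<lambda>ys. ws @ ys) ` permutations_of_multiset (A - mset ws)"
  proof (intro set_eqI iffI)
    fix xs assume xs: "xs \<in> {xs \<in> permutations_of_multiset A. take (length ws) xs = ws}"
    then have split: "xs = ws @ drop (length ws) xs"
      by (metis (mono_tags) append_take_drop_id mem_Collect_eq)
    with xs have "mset (drop (length ws) xs) = A - mset ws"
      by (metis (mono_tags) mem_Collect_eq permutations_of_multisetD add_diff_cancel_left' mset_append)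
    with split show "xs \<in> (\<lambda>ys. ws @ ys) ` permutations_of_multiset (A - mset ws)"
      by (metis image_eqI permutations_of_multisetI)
  next
    fix xs assume "xs \<in> (\<lambda>ys. ws @ ys) ` permutations_of_multiset (A - mset ws)"
    then obtain ys where "xs = ws @ ys" "mset ys = A - mset ws"
      by (auto dest: permutations_of_multisetD)
    with assms show "xs \<in> {xs \<in> permutations_of_multiset A. take (length ws) xs = ws}"
      by (auto intro: permutations_of_multisetI simp: subset_mset.add_diff_inverse)
  qed
  then show ?thesis
    by (simp add: card_image inj_on_def)
qed

lemma card_permutations_of_multiset_mult_prod_fact:
  assumes "finite X" "set_mset A \<subseteq> X"
  shows "card (permutations_of_multiset A) * (\<Prod>x\<in>X. fact (count A x)) = fact (size A)"
proof -
  have "(\<Prod>x\<in>X. fact (count A x)) = (\<Prod>x\<in>set_mset A. fact (count A x))"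
    by (rule prod.mono_neutral_right) (use assms in \<open>auto simp: not_in_iff\<close>)
  then show ?thesis
    by (metis card_permutations_of_multiset_aux)
qed

lemma card_balanced_seqs_mult_fact: "card (balanced_seqs v l) * fact l ^ v = fact (v * l)"
  using card_permutations_of_multiset_mult_prod_fact[of "{..<v}" "balanced_mset v l"]
    set_mset_balanced_mset[of v l]
  by (simp add: count_balanced_mset size_balanced_mset balanced_seqs_eq_permutations_of_multiset)

lemma balanced_seqs_prefix_eq_empty:
  assumes "a < v" "l < count_list ws a"
  shows "{\<sigma> \<in> balanced_seqs v l. take (length ws) \<sigma> = ws} = {}"
proof -
  have "count_list ws a \<le> l" if "\<sigma> \<in> balanced_seqs v l" "take (length ws) \<sigma> = ws" for \<sigma>
  proof -
    have "count_list \<sigma> a = count_list ws a + count_list (drop (length ws) \<sigma>) a"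
      using that(2) count_list_append by (metis append_take_drop_id)
    moreover have "count_list \<sigma> a = l"
      using that(1) assms(1) by (simp add: balanced_seqs_def)
    ultimately show ?thesis
      by simp
  qed
  then show ?thesis
    using assms(2) by (auto simp: not_le[symmetric])
qed

lemma card_balanced_seqs_prefix_mult_fact:
  assumes ws: "set ws \<subseteq> {..<v}" and counts: "\<forall>a<v. count_list ws a \<le> l"
  shows "card {\<sigma> \<in> balanced_seqs v l. take (length ws) \<sigma> = ws} * (\<Prod>a<v. fact (l - count_list ws a)) =
         fact (v * l - length ws)"
proof -
  define A where "A = balanced_mset v l"
  have sub: "mset ws \<subseteq># A"
  proof (rule mset_subset_eqI)
    fix a
    show "count (mset ws) a \<le> count A a"
      using counts ws by (cases "a < v") (auto simp: A_def count_balanced_mset count_mset count_list_0_iff)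
  qed
  have "set_mset (A - mset ws) \<subseteq> {..<v}"
    using set_mset_balanced_mset[of v l] by (auto simp: A_def dest: in_diffD)
  then have "card (permutations_of_multiset (A - mset ws)) * (\<Prod>a<v. fact (count (A - mset ws) a)) =
             fact (size (A - mset ws))"
    by (intro card_permutations_of_multiset_mult_prod_fact) auto
  then show ?thesis
    using sub
    by (simp add: A_def count_balanced_mset count_mset size_Diff_submset size_balanced_mset
                  card_permutations_of_multiset_prefix balanced_seqs_eq_permutations_of_multiset)
qed

lemma card_balanced_seqs_prefix:
  assumes ws: "set ws \<subseteq> {..<v}"
  shows "real (card {\<sigma> \<in> balanced_seqs v l. take (length ws) \<sigma> = ws}) * falling (v * l) (length ws) =
         real (card (balanced_seqs v l)) * (\<Prod>a<v. falling l (count_list ws a))"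
proof (cases "\<forall>a<v. count_list ws a \<le> l")
  case False
  then obtain a where a: "a < v" "l < count_list ws a"
    by auto
  then have "(\<Prod>a<v. falling l (count_list ws a)) = 0"
    by (auto intro: prod_zero falling_eq_0)
  then show ?thesis
    unfolding balanced_seqs_prefix_eq_empty[OF a] by simp
next
  case True
  define C where "C = real (card {\<sigma> \<in> balanced_seqs v l. take (length ws) \<sigma> = ws})"
  define Q where "Q = (\<Prod>a<v. fact (l - count_list ws a) :: real)"
  have "length ws = (\<Sum>a<v. count_list ws a)"
    using ws by (simp add: sum_count_set)
  also have "\<dots> \<le> (\<Sum>a<v. l)"
    using True by (intro sum_mono) auto
  finally have len: "length ws \<le> v * l"
    by simp
  have "C * falling (v * l) (length ws) * Q = falling (v * l) (length ws) * fact (v * l - length ws)"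
    using arg_cong[OF card_balanced_seqs_prefix_mult_fact[OF ws True], of real]
    by (simp add: C_def Q_def)
  also have "\<dots> = real (card (balanced_seqs v l)) * fact l ^ v"
    using falling_mult_fact[OF len] arg_cong[OF card_balanced_seqs_mult_fact, of real] by simp
  also have "fact l ^ v = (\<Prod>a<v. falling l (count_list ws a)) * Q"
    unfolding Q_def prod.distrib[symmetric] using True
    by (simp add: falling_mult_fact)
  finally have "C * falling (v * l) (length ws) * Q =
                real (card (balanced_seqs v l)) * (\<Prod>a<v. falling l (count_list ws a)) * Q"
    by (simp add: mult.assoc)
  moreover have "Q \<noteq> 0"
    by (simp add: Q_def)
  ultimately show ?thesis
    by (simp add: C_def)
qed

lemma permute_list_inv_permute_list:
  assumes "p permutes {..<length xs}"
  shows "permute_list (inv p) (permute_list p xs) = xs"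
  using permute_list_compose[OF permutes_inv[OF assms], of p] permutes_inv_o(1)[OF assms] by simp

lemma permute_list_permute_list_inv:
  assumes "p permutes {..<length xs}"
  shows "permute_list p (permute_list (inv p) xs) = xs"
  using permute_list_compose[OF assms, of "inv p"] permutes_inv_o(2)[OF assms] by simp

lemma card_permutations_of_multiset_permute_list:
  assumes p: "p permutes {..<size A}"
  shows "card {xs \<in> permutations_of_multiset A. P (permute_list p xs)} =
         card {xs \<in> permutations_of_multiset A. P xs}"
proof -
  have len: "length xs = size A" if "xs \<in> permutations_of_multiset A" for xs
    using that by (metis permutations_of_multisetD size_mset)
  have "inj_on (permute_list p) (permutations_of_multiset A)"
    using p len by (metis inj_onI permute_list_inv_permute_list)
  moreover have "permute_list p ` permutations_of_multiset A = permutations_of_multiset A"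
  proof
    show "permute_list p ` permutations_of_multiset A \<subseteq> permutations_of_multiset A"
      using p len by (auto intro!: permutations_of_multisetI dest: permutations_of_multisetD)
    show "permutations_of_multiset A \<subseteq> permute_list p ` permutations_of_multiset A"
    proof
      fix xs assume xs: "xs \<in> permutations_of_multiset A"
      then have "permute_list (inv p) xs \<in> permutations_of_multiset A"
        using permutes_inv[OF p] len
        by (auto intro!: permutations_of_multisetI dest: permutations_of_multisetD)
      then show "xs \<in> permute_list p ` permutations_of_multiset A"
        using xs p len by (metis image_eqI permute_list_permute_list_inv)
    qed
  qed
  ultimately have "bij_betw (permute_list p) {xs \<in> permutations_of_multiset A. P (permute_list p xs)}
                    {xs \<in> permutations_of_multiset A. P xs}"
    by (auto simp: bij_betw_def Compr_image_eq intro: inj_on_subset)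
  then show ?thesis
    by (rule bij_betw_same_card)
qed

lemma permutes_extending_distinct_list:
  assumes "distinct ps" "set ps \<subseteq> {..<n}"
  obtains p where "p permutes {..<n}" "\<And>j. j < length ps \<Longrightarrow> p j = ps ! j"
proof -
  define qs where "qs = ps @ sorted_list_of_set ({..<n} - set ps)"
  have qs: "distinct qs" "set qs = {..<n}"
    using assms by (auto simp: qs_def)
  then have "length qs = n"
    using distinct_card by fastforce
  define p where "p j = (if j < n then qs ! j else j)" for j
  have "bij_betw ((!) qs) {..<n} {..<n}"
    using bij_betw_nth[OF qs(1)] \<open>length qs = n\<close> qs(2) by simp
  then have "bij_betw p {..<n} {..<n}"
    by (rule bij_betw_cong[THEN iffD1, rotated]) (simp add: p_def)
  then have "p permutes {..<n}"
    by (rule bij_imp_permutes) (simp add: p_def)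
  moreover have "p j = ps ! j" if "j < length ps" for j
    using that \<open>length qs = n\<close> by (auto simp: p_def qs_def nth_append)
  ultimately show ?thesis
    using that by blast
qed

text \<open>A permutation of the positions moving ps to the front maps the balanced sequences
  bijectively onto themselves, which reduces the count to the case of a prefix.\<close>

lemma card_balanced_seqs_positions:
  assumes ps: "distinct ps" "set ps \<subseteq> {..<v * l}"
    and ws: "length ws = length ps" "set ws \<subseteq> {..<v}"
  shows "real (card {\<sigma> \<in> balanced_seqs v l. map ((!) \<sigma>) ps = ws}) * falling (v * l) (length ps) =
         real (card (balanced_seqs v l)) * (\<Prod>a<v. falling l (count_list ws a))"
proof -
  obtain p where p: "p permutes {..<v * l}" "\<And>j. j < length ps \<Longrightarrow> p j = ps ! j"
    using permutes_extending_distinct_list[OF ps] by blast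
  have "length ps \<le> v * l"
    using ps by (metis card_lessThan card_mono distinct_card finite_lessThan)
  then have "map ((!) \<sigma>) ps = take (length ps) (permute_list p \<sigma>)" if "\<sigma> \<in> balanced_seqs v l" for \<sigma>
    using that p by (auto simp: length_balanced_seqs permute_list_nth intro!: nth_equalityI)
  then have "card {\<sigma> \<in> balanced_seqs v l. map ((!) \<sigma>) ps = ws} =
             card {\<sigma> \<in> balanced_seqs v l. take (length ws) (permute_list p \<sigma>) = ws}"
    using ws by (metis (no_types, lifting) Collect_cong)
  also have "\<dots> = card {\<sigma> \<in> balanced_seqs v l. take (length ws) \<sigma> = ws}"
    using p(1) unfolding balanced_seqs_eq_permutations_of_multiset
    by (intro card_permutations_of_multiset_permute_list) (simp add: size_balanced_mset)
  finally show ?thesis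
    using card_balanced_seqs_prefix[OF ws(2), of l] ws(1) by simp
qed

definition occurs_at :: "nat list \<Rightarrow> nat list \<Rightarrow> nat \<Rightarrow> bool" where
  "occurs_at \<sigma> z i \<longleftrightarrow> (\<forall>\<iota><length z. \<sigma> ! ((i + \<iota>) mod length \<sigma>) = z ! \<iota>)"

lemma occ_eq_card_occurs_at: "occ \<sigma> z = card {i \<in> {..<length \<sigma>}. occurs_at \<sigma> z i}"
  unfolding occ_def occurs_at_def by (rule arg_cong[where f = card]) auto

lemma occurs_at_mod: "occurs_at \<sigma> z (i mod length \<sigma>) = occurs_at \<sigma> z i"
  by (simp add: occurs_at_def mod_add_left_eq)

lemma not_occurs_at_overlapping:
  assumes "0 < e" "e < length z" "drop e z \<noteq> take (length z - e) z"
  shows "\<not> (occurs_at \<sigma> z i \<and> occurs_at \<sigma> z (i + e))"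
proof
  assume "occurs_at \<sigma> z i \<and> occurs_at \<sigma> z (i + e)"
  then have at_i: "\<And>\<iota>. \<iota> < length z \<Longrightarrow> \<sigma> ! ((i + \<iota>) mod length \<sigma>) = z ! \<iota>"
    and at_ie: "\<And>\<iota>. \<iota> < length z \<Longrightarrow> \<sigma> ! ((i + e + \<iota>) mod length \<sigma>) = z ! \<iota>"
    by (auto simp: occurs_at_def)
  have "drop e z ! j = take (length z - e) z ! j" if "j < length z - e" for j
  proof -
    have "drop e z ! j = \<sigma> ! ((i + (e + j)) mod length \<sigma>)"
      using that at_i[of "e + j"] by simp
    also have "\<dots> = take (length z - e) z ! j"
      using that at_ie[of j] by (simp add: add.assoc)
    finally show ?thesis .
  qed
  then show False
    using assms by (auto intro: nth_equalityI)
qed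

definition cyclic_window :: "nat \<Rightarrow> nat \<Rightarrow> nat \<Rightarrow> nat list" where
  "cyclic_window n i k = map (\<lambda>j. (i + j) mod n) [0..<k]"

lemma length_cyclic_window [simp]: "length (cyclic_window n i k) = k"
  by (simp add: cyclic_window_def)

lemma occurs_at_iff_cyclic_window:
  "occurs_at \<sigma> z i \<longleftrightarrow> map ((!) \<sigma>) (cyclic_window (length \<sigma>) i (length z)) = z"
proof -
  have "map ((!) \<sigma>) (cyclic_window (length \<sigma>) i (length z)) = map ((!) z) [0..<length z] \<longleftrightarrow> occurs_at \<sigma> z i"
    by (auto simp: cyclic_window_def occurs_at_def map_eq_conv)
  then show ?thesis
    by (simp add: map_nth)
qed

lemma add_mod_cancel_left:
  fixes a b n :: nat
  assumes "(i + a) mod n = (i + b) mod n" "a < n" "b < n"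
  shows "a = b"
proof -
  from assms(1) obtain q1 q2 where "i + a + n * q1 = i + b + n * q2"
    unfolding nat_mod_eq_iff by blast
  then have "a + n * q1 = b + n * q2"
    by simp
  then have "a mod n = b mod n"
    unfolding nat_mod_eq_iff by blast
  with assms show ?thesis
    by simp
qed

lemma distinct_cyclic_window: "k \<le> n \<Longrightarrow> distinct (cyclic_window n i k)"
  by (auto simp: cyclic_window_def distinct_map inj_on_def dest: add_mod_cancel_left)

lemma set_cyclic_window_subset: "0 < n \<Longrightarrow> set (cyclic_window n i k) \<subseteq> {..<n}"
  by (auto simp: cyclic_window_def)

lemma disjoint_cyclic_windows:
  assumes "k \<le> d" "d + k \<le> n"
  shows "set (cyclic_window n i k) \<inter> set (cyclic_window n (i + d) k) = {}"
proof -
  have "(i + a) mod n \<noteq> (i + (d + b)) mod n" if "a < k" "b < k" for a b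
    using that assms add_mod_cancel_left[of i a n "d + b"] by auto
  then show ?thesis
    by (auto simp: cyclic_window_def add.assoc)
qed

lemma bij_betw_add_mod:
  fixes n :: nat
  assumes "0 < n"
  shows "bij_betw (\<lambda>d. (i + d) mod n) {..<n} {..<n}"
proof -
  have "inj_on (\<lambda>d. (i + d) mod n) {..<n}"
    by (auto simp: inj_on_def dest: add_mod_cancel_left)
  moreover have "(\<lambda>d. (i + d) mod n) ` {..<n} \<subseteq> {..<n}"
    using assms by auto
  ultimately show ?thesis
    by (simp add: bij_betw_def endo_inj_surj)
qed

lemma card_balanced_seqs_occurs_at:
  assumes "0 < length z" "length z \<le> v * l" "set z \<subseteq> {..<v}"
  shows "real (card {\<sigma> \<in> balanced_seqs v l. occurs_at \<sigma> z i}) * falling (v * l) (length z) =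
         real (card (balanced_seqs v l)) * (\<Prod>a<v. falling l (count_list z a))"
proof -
  have "{\<sigma> \<in> balanced_seqs v l. occurs_at \<sigma> z i} =
        {\<sigma> \<in> balanced_seqs v l. map ((!) \<sigma>) (cyclic_window (v * l) i (length z)) = z}"
    by (auto simp: occurs_at_iff_cyclic_window length_balanced_seqs)
  moreover have "0 < v * l"
    using assms by linarith
  ultimately show ?thesis
    using assms card_balanced_seqs_positions[of "cyclic_window (v * l) i (length z)" v l z]
    by (simp add: distinct_cyclic_window set_cyclic_window_subset)
qed

lemma card_balanced_seqs_occurs_at_twice:
  assumes "0 < length z" "length z \<le> d" "d + length z \<le> v * l" "set z \<subseteq> {..<v}"
  shows "real (card {\<sigma> \<in> balanced_seqs v l. occurs_at \<sigma> z i \<and> occurs_at \<sigma> z (i + d)}) *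
           falling (v * l) (2 * length z) =
         real (card (balanced_seqs v l)) * (\<Prod>a<v. falling l (2 * count_list z a))"
proof -
  define ps where "ps = cyclic_window (v * l) i (length z) @ cyclic_window (v * l) (i + d) (length z)"
  have "{\<sigma> \<in> balanced_seqs v l. occurs_at \<sigma> z i \<and> occurs_at \<sigma> z (i + d)} =
        {\<sigma> \<in> balanced_seqs v l. map ((!) \<sigma>) ps = z @ z}"
    by (auto simp: ps_def occurs_at_iff_cyclic_window length_balanced_seqs)
  moreover have "0 < v * l"
    using assms by linarith
  then have "distinct ps" "set ps \<subseteq> {..<v * l}"
    using assms disjoint_cyclic_windows[of "length z" d "v * l" i]
      set_cyclic_window_subset[of "v * l"]
    by (auto simp: ps_def distinct_cyclic_window)
  ultimately show ?thesis
    using assms card_balanced_seqs_positions[of ps v l "z @ z"]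
    by (simp add: ps_def mult_2)
qed

lemma sum_occ_balanced_seqs:
  "(\<Sum>\<sigma>\<in>balanced_seqs v l. real (occ \<sigma> z)) =
   (\<Sum>i<v * l. real (card {\<sigma> \<in> balanced_seqs v l. occurs_at \<sigma> z i}))"
proof -
  have "(\<Sum>\<sigma>\<in>balanced_seqs v l. occ \<sigma> z) =
        (\<Sum>\<sigma>\<in>balanced_seqs v l. card {i \<in> {..<v * l}. occurs_at \<sigma> z i})"
    by (intro sum.cong refl) (simp add: occ_eq_card_occurs_at length_balanced_seqs)
  also have "\<dots> = (\<Sum>i<v * l. card {\<sigma> \<in> balanced_seqs v l. occurs_at \<sigma> z i})"
    by (rule card_filter_sum_swap[OF finite_balanced_seqs finite_lessThan])
  finally show ?thesis
    by (simp only: flip: of_nat_sum)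
qed

lemma sum_occ_squared_balanced_seqs:
  "(\<Sum>\<sigma>\<in>balanced_seqs v l. (real (occ \<sigma> z))\<^sup>2) =
   (\<Sum>i<v * l. \<Sum>j<v * l. real (card {\<sigma> \<in> balanced_seqs v l. occurs_at \<sigma> z i \<and> occurs_at \<sigma> z j}))"
proof -
  have "(\<Sum>\<sigma>\<in>balanced_seqs v l. (occ \<sigma> z)\<^sup>2) =
        (\<Sum>\<sigma>\<in>balanced_seqs v l. (card {i \<in> {..<v * l}. occurs_at \<sigma> z i})\<^sup>2)"
    by (intro sum.cong refl) (simp add: occ_eq_card_occurs_at length_balanced_seqs)
  also have "\<dots> = (\<Sum>i<v * l. \<Sum>j<v * l. card {\<sigma> \<in> balanced_seqs v l. occurs_at \<sigma> z i \<and> occurs_at \<sigma> z j})"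
    by (rule card_filter_squared_sum_swap[OF finite_balanced_seqs finite_lessThan])
  finally show ?thesis
    by (simp only: flip: of_nat_sum of_nat_power)
qed

locale unbordered_word =
  fixes v l :: nat and z :: "nat list"
  assumes word_nonempty: "z \<noteq> []"
    and word_short: "2 * length z \<le> v * l + 1"
    and word_letters: "set z \<subseteq> {..<v}"
    and unbordered: "\<And>e. 0 < e \<Longrightarrow> e < length z \<Longrightarrow> drop e z \<noteq> take (length z - e) z"
begin

lemma length_word_pos: "0 < length z"
  using word_nonempty by simp

lemma length_word_le: "length z \<le> v * l"
  using length_word_pos word_short by linarith

lemma balanced_length_pos: "0 < v * l"
  using length_word_pos length_word_le by linarith

lemma falling_length_word:
  "falling (v * l) (length z) = real (v * l) * falling (v * l - 1) (length z - 1)"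
  using length_word_pos balanced_length_pos falling_Suc_Suc[of "v * l - 1" "length z - 1"] by simp

lemma falling_twice_length_word:
  "falling (v * l) (2 * length z) =
   real (v * l) * real (v * l + 1 - 2 * length z) * falling (v * l - 1) (2 * length z - 2)"
proof -
  have "Suc (Suc (2 * length z - 2)) = 2 * length z" "Suc (2 * length z - 2) \<le> v * l"
    using length_word_pos word_short by linarith+
  then show ?thesis
    using falling_Suc_Suc_first_last[of "2 * length z - 2" "v * l"] by (simp add: Suc_diff_Suc)
qed

lemma prod_falling_twice_count_eq_0:
  assumes "v * l + 1 = 2 * length z"
  shows "(\<Prod>a<v. falling l (2 * count_list z a)) = 0"
  using prod_falling_count_list_eq_0[of "z @ z" v l] word_letters assms by (simp add: mult_2)

lemma card_occurs_at:
  "real (card {\<sigma> \<in> balanced_seqs v l. occurs_at \<sigma> z i}) =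
   real (card (balanced_seqs v l)) * (\<Prod>a<v. falling l (count_list z a)) / falling (v * l) (length z)"
  using card_balanced_seqs_occurs_at[of z v l i] word_nonempty length_word_le word_letters
    falling_nonzero[OF length_word_le]
  by (simp add: field_simps)

text \<open>An occurrence at i + d with d > n - |z| is followed by the one at i at cyclic distance
  n - d < |z|, since i + d + (n - d) = i + n.\<close>

lemma not_occurs_at_close:
  assumes "\<sigma> \<in> balanced_seqs v l" "0 < d" "d < v * l" "\<not> (length z \<le> d \<and> d + length z \<le> v * l)"
  shows "\<not> (occurs_at \<sigma> z i \<and> occurs_at \<sigma> z (i + d))"
proof (cases "d < length z")
  case True
  then show ?thesis
    using assms(2) unbordered not_occurs_at_overlapping by blast
next
  case False
  then have e: "0 < v * l - d" "v * l - d < length z"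
    using assms(3,4) by auto
  have "occurs_at \<sigma> z (i + d + (v * l - d)) = occurs_at \<sigma> z i"
    using assms(3) occurs_at_mod[of \<sigma> z "i + v * l"] occurs_at_mod[of \<sigma> z i]
      length_balanced_seqs[OF assms(1)]
    by simp
  then show ?thesis
    using not_occurs_at_overlapping[OF e unbordered[OF e], of \<sigma> "i + d"] by blast
qed

lemma card_occurs_at_pair:
  assumes "d < v * l"
  shows "real (card {\<sigma> \<in> balanced_seqs v l. occurs_at \<sigma> z i \<and> occurs_at \<sigma> z (i + d)}) =
    (if d = 0 then real (card {\<sigma> \<in> balanced_seqs v l. occurs_at \<sigma> z i})
     else if length z \<le> d \<and> d + length z \<le> v * l then
       real (card (balanced_seqs v l)) * (\<Prod>a<v. falling l (2 * count_list z a)) /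
         falling (v * l) (2 * length z)
     else 0)"
proof (cases "length z \<le> d \<and> d + length z \<le> v * l")
  case True
  then have "falling (v * l) (2 * length z) \<noteq> 0"
    by (intro falling_nonzero) simp
  with True show ?thesis
    using card_balanced_seqs_occurs_at_twice[of z d v l i] word_nonempty word_letters
    by (auto simp: field_simps)
next
  case no_window: False
  show ?thesis
  proof (cases "d = 0")
    case False
    then have empty: "{\<sigma> \<in> balanced_seqs v l. occurs_at \<sigma> z i \<and> occurs_at \<sigma> z (i + d)} = {}"
      using not_occurs_at_close assms no_window by blast
    show ?thesis
      unfolding empty using False no_window by auto
  qed simp
qed

lemma sum_card_occurs_at_pairs:
  "(\<Sum>j<v * l. real (card {\<sigma> \<in> balanced_seqs v l. occurs_at \<sigma> z i \<and> occurs_at \<sigma> z j})) =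
   real (card {\<sigma> \<in> balanced_seqs v l. occurs_at \<sigma> z i}) +
   real (v * l + 1 - 2 * length z) *
     (real (card (balanced_seqs v l)) * (\<Prod>a<v. falling l (2 * count_list z a)) /
      falling (v * l) (2 * length z))"
  (is "_ = ?single + _ * ?pair")
proof -
  define n where "n = v * l"
  define t where "t = length z"
  have "0 < t" "0 < n"
    using length_word_pos balanced_length_pos by (simp_all add: t_def n_def)
  have "(\<Sum>j<n. real (card {\<sigma> \<in> balanced_seqs v l. occurs_at \<sigma> z i \<and> occurs_at \<sigma> z j})) =
        (\<Sum>d<n. real (card {\<sigma> \<in> balanced_seqs v l. occurs_at \<sigma> z i \<and> occurs_at \<sigma> z ((i + d) mod n)}))"
    by (rule sum.reindex_bij_betw[OF bij_betw_add_mod[OF \<open>0 < n\<close>], symmetric])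
  also have "\<dots> = (\<Sum>d<n. real (card {\<sigma> \<in> balanced_seqs v l. occurs_at \<sigma> z i \<and> occurs_at \<sigma> z (i + d)}))"
  proof -
    have "occurs_at \<sigma> z ((i + d) mod n) = occurs_at \<sigma> z (i + d)" if "\<sigma> \<in> balanced_seqs v l" for \<sigma> d
      using that occurs_at_mod length_balanced_seqs unfolding n_def by metis
    then have "{\<sigma> \<in> balanced_seqs v l. occurs_at \<sigma> z i \<and> occurs_at \<sigma> z ((i + d) mod n)} =
               {\<sigma> \<in> balanced_seqs v l. occurs_at \<sigma> z i \<and> occurs_at \<sigma> z (i + d)}" for d
      by blast
    then show ?thesis
      by simp
  qed
  also have "\<dots> = (\<Sum>d<n. (if d = 0 then ?single else 0) + (if t \<le> d \<and> d + t \<le> n then ?pair else 0))"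
    using \<open>0 < t\<close> by (intro sum.cong refl) (auto simp: card_occurs_at_pair n_def t_def)
  also have "\<dots> = ?single + real (card {t..n - t}) * ?pair"
  proof -
    have "{d \<in> {..<n}. t \<le> d \<and> d + t \<le> n} = {t..n - t}"
      using \<open>0 < t\<close> by auto
    then show ?thesis
      using \<open>0 < n\<close> by (simp add: sum.distrib sum.inter_filter[symmetric])
  qed
  finally show ?thesis
    using word_short by (simp add: n_def t_def)
qed

lemma expectation_occ:
  "measure_pmf.expectation (pmf_of_set (balanced_seqs v l)) (\<lambda>\<sigma>. real (occ \<sigma> z)) =
   (\<Prod>a<v. falling l (count_list z a)) / falling (v * l - 1) (length z - 1)"
proof -
  have "falling (v * l - 1) (length z - 1) \<noteq> 0"
    using length_word_le by (intro falling_nonzero) simp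
  moreover have "card (balanced_seqs v l) \<noteq> 0"
    using finite_balanced_seqs balanced_seqs_nonempty by simp
  ultimately show ?thesis
    using balanced_length_pos
    by (simp add: integral_pmf_of_set finite_balanced_seqs balanced_seqs_nonempty
                  sum_occ_balanced_seqs card_occurs_at falling_length_word)
qed

lemma expectation_occ_squared:
  "measure_pmf.expectation (pmf_of_set (balanced_seqs v l)) (\<lambda>\<sigma>. (real (occ \<sigma> z))\<^sup>2) =
   (\<Prod>a<v. falling l (count_list z a)) / falling (v * l - 1) (length z - 1) +
   (\<Prod>a<v. falling l (2 * count_list z a)) / falling (v * l - 1) (2 * length z - 2)"
proof -
  define N where "N = real (card (balanced_seqs v l))"
  define c where "c = real (v * l + 1 - 2 * length z)"
  define P2 where "P2 = (\<Prod>a<v. falling l (2 * count_list z a))"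
  have "N \<noteq> 0"
    using finite_balanced_seqs balanced_seqs_nonempty by (simp add: N_def)
  have "(\<Sum>\<sigma>\<in>balanced_seqs v l. (real (occ \<sigma> z))\<^sup>2) =
        (\<Sum>\<sigma>\<in>balanced_seqs v l. real (occ \<sigma> z)) + real (v * l) * c * (N * P2 / falling (v * l) (2 * length z))"
    by (simp add: sum_occ_squared_balanced_seqs sum_card_occurs_at_pairs sum_occ_balanced_seqs
                  sum.distrib N_def c_def P2_def)
  moreover have "real (v * l) * c * (N * P2 / falling (v * l) (2 * length z)) / N =
                 P2 / falling (v * l - 1) (2 * length z - 2)"
  proof (cases "c = 0")
    case True
    then have "v * l + 1 - 2 * length z = 0"
      unfolding c_def by (simp only: of_nat_eq_0_iff)
    then have "v * l + 1 = 2 * length z"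
      using word_short by linarith
    then have "P2 = 0"
      unfolding P2_def by (rule prod_falling_twice_count_eq_0)
    with True show ?thesis
      by simp
  next
    case False
    have "falling (v * l - 1) (2 * length z - 2) \<noteq> 0"
      using word_short by (intro falling_nonzero) linarith
    with False \<open>N \<noteq> 0\<close> balanced_length_pos show ?thesis
      by (simp add: falling_twice_length_word[folded c_def])
  qed
  ultimately show ?thesis
    using expectation_occ
    by (simp add: integral_pmf_of_set finite_balanced_seqs balanced_seqs_nonempty add_divide_distrib
                  N_def P2_def)
qed

end

theorem corollary4:
  fixes v l t :: nat and z :: "nat list"
  assumes "v \<ge> 2" and "l \<ge> 1" and "t \<ge> 1"
    and "v * l > 2 * t - 2"
    and "length z = t" and "set z \<subseteq> {..<v}"
    and "\<forall>i. 1 \<le> i \<and> i < t \<longrightarrow> drop i z \<noteq> take (t - i) z"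
  shows "measure_pmf.variance (pmf_of_set (balanced_seqs v l)) (\<lambda>\<sigma>. real (occ \<sigma> z)) =
     (\<Prod>a<v. falling l (count_list z a)) / falling (v * l - 1) (t - 1)
     - ((\<Prod>a<v. falling l (count_list z a)) / falling (v * l - 1) (t - 1))\<^sup>2
     + (\<Prod>a<v. falling l (2 * count_list z a)) / falling (v * l - 1) (2 * t - 2)"
proof -
  interpret unbordered_word v l z
    using assms(3-7) by unfold_locales auto
  have "measure_pmf.variance (pmf_of_set (balanced_seqs v l)) (\<lambda>\<sigma>. real (occ \<sigma> z)) =
        measure_pmf.expectation (pmf_of_set (balanced_seqs v l)) (\<lambda>\<sigma>. (real (occ \<sigma> z))\<^sup>2) -
        (measure_pmf.expectation (pmf_of_set (balanced_seqs v l)) (\<lambda>\<sigma>. real (occ \<sigma> z)))\<^sup>2"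
    by (rule variance_pmf_of_set[OF finite_balanced_seqs balanced_seqs_nonempty])
  then show ?thesis
    unfolding expectation_occ expectation_occ_squared assms(5) by simp
qed

end
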